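(* Let $b,n\geq 2$ be integers, let $a=\frac{b^n-1}{b-1}$, let $d\in\mathbb{P}$ with $\gcd(a,d)=1$, and let $$A=\left(a,\ ba+d,\ b^2a+\tfrac{b^2-1}{b-1}d,\ \dots,\ b^{n-1}a+\tfrac{b^{n-1}-1}{b-1}d\right).$$ Then the type of $\langle A\rangle$ is $t(A)=n-1$, and $$PF(A)=\{F(A),\ F(A)-d,\ \dots,\ F(A)-(n-2)d\}.$$
   Context: $\mathbb{P}$ denotes the positive integers. $\langle A\rangle$ is the numerical semigroup of all nonnegative integer combinations of entries of $A$; $F(A)$ is the largest integer not in $\langle A\rangle$. An integer $u\notin\langle A\rangle$ is a pseudo-Frobenius number if $u+s\in\langle A\rangle$ for all $s\in\langle A\rangle\setminus\{0\}$; $PF(A)$ is the set of pseudo-Frobenius numbers and the type $t(A)$ is its cardinality. *)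

theory Defs
  imports Main
begin

definition semigroup_gen :: "nat list \<Rightarrow> int set" where
  "semigroup_gen A = {int (\<Sum>i<length A. c i * A ! i) | c :: nat \<Rightarrow> nat. True}"

definition frobenius :: "nat list \<Rightarrow> int" where
  "frobenius A = (GREATEST x. x \<notin> semigroup_gen A)"

definition pseudo_frobenius :: "nat list \<Rightarrow> int set" where
  "pseudo_frobenius A = {u. u \<notin> semigroup_gen A \<and>
      (\<forall>s \<in> semigroup_gen A - {0}. u + s \<in> semigroup_gen A)}"

definition sg_type :: "nat list \<Rightarrow> nat" where
  "sg_type A = card (pseudo_frobenius A)"

end

theory Submission
  imports Defs "HOL-Number_Theory.Cong"
begin

text \<open>
  Write \<open>R i = (b^i - 1) div (b - 1)\<close> and \<open>g = (b - 1) a + d = b^n - 1 + d\<close>. The generators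
  are \<open>g R i + a\<close>, so the element with coefficient vector \<open>c\<close> is \<open>g M + a N\<close> with
  \<open>M = \<Sum> c i R i\<close> and \<open>N = \<Sum> c i\<close>, and \<open>\<Sum> c i b^i = (b - 1) M + N\<close>.

  If \<open>a g - j d\<close> with \<open>1 \<le> j < n\<close> were an element, coprimality of \<open>g\<close> and \<open>a\<close> would force
  \<open>M = a - j\<close> and \<open>N = j (b - 1)\<close>, so \<open>\<Sum> c i b^i = b^n - 1\<close>; but carrying shows that such a
  sum needs coefficient sum at least \<open>n (b - 1)\<close>. Every residue \<open>m < a\<close> is a value of \<open>M\<close>
  with \<open>N \<le> b + (b - 1) (a - 1 - m)\<close>, which puts everything above \<open>a g - d\<close> into the
  semigroup. Adding a generator to \<open>a g - j d\<close> gives an explicit element, so these \<open>n - 1\<close>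
  numbers are pseudo-Frobenius.

  Conversely, for a pseudo-Frobenius \<open>u\<close> take a representation of \<open>u + a\<close>; it uses no copy
  of \<open>a\<close>, and we choose it of maximal weight \<open>\<Sum> c i (b + 1)^i\<close>. The relations
  \<open>b gen k + gen (j + 1) = gen (k + 1) + b gen j\<close> and
  \<open>b gen (n - 1) + gen (j + 1) = b gen j + (b^n + d) a\<close> then bound it by a vector
  \<open>(0, ..., 0, b, b - 1, ..., b - 1)\<close> whose value is \<open>a g - (n - v) d + a\<close>. The difference is
  an element \<open>s\<close> with \<open>u + s = a g - (n - v) d\<close> outside the semigroup, hence \<open>s = 0\<close>.
\<close>

section \<open>Repunits and base-\<open>b\<close> expansions\<close>

definition repunit :: "nat \<Rightarrow> nat \<Rightarrow> nat" where
  "repunit b i = (b ^ i - 1) div (b - 1)"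

lemma minus_one_dvd_pow_minus_one: "(b - 1) dvd (b ^ i - 1 :: nat)"
proof (induction i)
  case (Suc i)
  show ?case
  proof (cases "b = 0")
    case False
    then have "b ^ Suc i - 1 = b * (b ^ i - 1) + (b - 1)"
      by (simp add: algebra_simps)
    then show ?thesis using Suc by simp
  qed simp
qed simp

lemma repunit_mult: "(b - 1) * repunit b i = b ^ i - 1"
  unfolding repunit_def using minus_one_dvd_pow_minus_one by simp

lemma pow_eq_repunit: "b \<ge> 1 \<Longrightarrow> b ^ i = (b - 1) * repunit b i + 1"
  using repunit_mult[of b i] one_le_power[of b i] by simp

lemma repunit_0 [simp]: "repunit b 0 = 0"
  unfolding repunit_def by simp

lemma repunit_Suc: "b \<ge> 2 \<Longrightarrow> repunit b (Suc i) = b * repunit b i + 1"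
proof -
  assume "b \<ge> 2"
  then have "(b - 1) * repunit b (Suc i) = (b - 1) * (b * repunit b i + 1)"
    using pow_eq_repunit[of b i] repunit_mult[of b "Suc i"] by (simp add: algebra_simps)
  moreover have "b - 1 \<noteq> 0" using \<open>b \<ge> 2\<close> by simp
  ultimately show ?thesis by (metis mult_left_cancel)
qed

lemma repunit_1: "b \<ge> 2 \<Longrightarrow> repunit b 1 = 1"
  using repunit_Suc[of b 0] by simp

lemma strict_mono_repunit:
  assumes "b \<ge> 2" shows "strict_mono (repunit b)"
proof (rule strict_mono_Suc_iff[THEN iffD2], rule allI)
  fix i
  have "repunit b i \<le> b * repunit b i" using assms by simp
  then show "repunit b i < repunit b (Suc i)" using assms by (simp add: repunit_Suc less_Suc_eq_le)
qed

lemma le_repunit: "b \<ge> 2 \<Longrightarrow> i \<le> repunit b i"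
  using strict_mono_imp_increasing strict_mono_repunit by blast

lemma mod_mult_eq_minus_one:
  fixes x b m :: nat
  assumes "x mod (b * m) = b * m - 1" and "b > 0" and "m > 0"
  shows "x mod b = b - 1" and "x div b mod m = m - 1"
proof -
  have "b * m - 1 = b * (m - 1) + (b - 1)"
    using assms(2,3) by (simp add: algebra_simps)
  then have eq: "b * (x div b mod m) + x mod b = b * (m - 1) + (b - 1)"
    using assms(1) mod_mult2_eq[of x b m] by simp
  have "x mod b = (b * (x div b mod m) + x mod b) mod b" by simp
  also have "\<dots> = b - 1" unfolding eq mod_mult_self4 using \<open>b > 0\<close> by simp
  finally show "x mod b = b - 1" .
  have "x div b mod m = (b * (x div b mod m) + x mod b) div b" using \<open>b > 0\<close> by simp
  also have "\<dots> = m - 1" unfolding eq using \<open>b > 0\<close> by (subst div_mult_self4) simp_all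
  finally show "x div b mod m = m - 1" .
qed

lemma coeff_sum_ge_if_mod_pow_eq_minus_one:
  fixes b x :: nat and c :: "nat \<Rightarrow> nat"
  assumes "b \<ge> 2" and "(x + (\<Sum>i<n. c i * b ^ i)) mod b ^ n = b ^ n - 1"
  shows "n * (b - 1) \<le> x + (\<Sum>i<n. c i)"
  using assms(2)
proof (induction n arbitrary: x c)
  case (Suc n)
  define y where "y = x + c 0"
  have "x + (\<Sum>i<Suc n. c i * b ^ i) = y + b * (\<Sum>i<n. c (Suc i) * b ^ i)"
    unfolding y_def sum.lessThan_Suc_shift by (simp add: sum_distrib_left algebra_simps)
  then have "(y + b * (\<Sum>i<n. c (Suc i) * b ^ i)) mod (b * b ^ n) = b * b ^ n - 1"
    using Suc.prems by simp
  from mod_mult_eq_minus_one[OF this] \<open>b \<ge> 2\<close>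
  have y_mod: "y mod b = b - 1"
    and "(y div b + (\<Sum>i<n. c (Suc i) * b ^ i)) mod b ^ n = b ^ n - 1"
    by (simp_all add: add.commute)
  then have "n * (b - 1) \<le> y div b + (\<Sum>i<n. c (Suc i))"
    using Suc.IH[of "y div b" "\<lambda>i. c (Suc i)"] by simp
  moreover have "y div b + (b - 1) \<le> y"
  proof -
    have "y div b \<le> b * (y div b)" using \<open>b \<ge> 2\<close> by simp
    moreover have "b * (y div b) + (b - 1) = y"
      using div_mult_mod_eq[of y b] y_mod by (simp add: mult.commute)
    ultimately show ?thesis by linarith
  qed
  ultimately show ?case
    unfolding y_def sum.lessThan_Suc_shift by simp
qed simp

lemma coprime_residue_decomposition:
  fixes x :: int and g a :: nat
  assumes "coprime g a" and "a > 0"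
  obtains m t where "m < a" and "x = int g * int m + int a * t"
proof -
  have "coprime (int g) (int a)" using assms(1) by simp
  then obtain y where y: "[int g * y = 1] (mod int a)"
    using cong_solve_coprime_int by blast
  define m where "m = nat ((x * y) mod int a)"
  have "m < a" unfolding m_def using assms(2) by (simp add: nat_less_iff)
  have "[int g * int m = int g * (x * y)] (mod int a)"
    unfolding m_def using assms(2) by (intro cong_scalar_left) (simp add: cong_def)
  also have "[int g * (x * y) = x] (mod int a)"
    using cong_scalar_left[OF y, of x] by (simp add: algebra_simps)
  finally have "int a dvd x - int g * int m"
    by (simp add: cong_iff_dvd_diff dvd_diff_commute)
  then obtain t where "x = int g * int m + int a * t"
    by (auto simp: dvd_def algebra_simps)
  with \<open>m < a\<close> show ?thesis using that by blast
qed

section \<open>Numerical semigroups via coefficient vectors\<close>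

definition lincomb :: "nat \<Rightarrow> (nat \<Rightarrow> nat) \<Rightarrow> (nat \<Rightarrow> nat) \<Rightarrow> nat" where
  "lincomb n w c = (\<Sum>i<n. c i * w i)"

lemma lincomb_add: "lincomb n w (\<lambda>i. c i + e i) = lincomb n w c + lincomb n w e"
  unfolding lincomb_def by (simp add: algebra_simps sum.distrib)

lemma lincomb_diff:
  "(\<And>i. i < n \<Longrightarrow> e i \<le> c i) \<Longrightarrow> lincomb n w (\<lambda>i. c i - e i) + lincomb n w e = lincomb n w c"
  unfolding lincomb_def sum.distrib[symmetric] by (rule sum.cong) (auto simp: add_mult_distrib[symmetric])

lemma lincomb_exchange:
  "(\<And>i. i < n \<Longrightarrow> e i \<le> c i) \<Longrightarrow>
    lincomb n w (\<lambda>i. c i - e i + e' i) + lincomb n w e = lincomb n w c + lincomb n w e'"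
  using lincomb_add[of n w "\<lambda>i. c i - e i" e'] lincomb_diff[of n e c w] by simp

lemma lincomb_unit:
  assumes "k < n" shows "lincomb n w (\<lambda>i. if i = k then x else 0) = x * w k"
proof -
  have "(\<lambda>i. (if i = k then x else 0) * w i) = (\<lambda>i. if i = k then x * w k else 0)"
    by auto
  then show ?thesis unfolding lincomb_def using assms by (simp only: sum.delta) simp
qed

lemma lincomb_two_units:
  "k < n \<Longrightarrow> j < n \<Longrightarrow>
    lincomb n w (\<lambda>i. (if i = k then x else 0) + (if i = j then y else 0)) = x * w k + y * w j"
  by (simp add: lincomb_add lincomb_unit)

lemma lincomb_Suc: "lincomb (Suc n) w c = lincomb n w c + c n * w n"
  unfolding lincomb_def by simp

lemma lincomb_one: "lincomb n (\<lambda>_. 1) c = (\<Sum>i<n. c i)"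
  unfolding lincomb_def by simp

lemma lincomb_affine:
  "lincomb n (\<lambda>i. p * w i + q) c = p * lincomb n w c + q * (\<Sum>i<n. c i)"
  unfolding lincomb_def by (simp add: algebra_simps sum.distrib sum_distrib_left)

lemma lincomb_le_mult:
  "(\<And>i. i < n \<Longrightarrow> w' i \<le> K * w i) \<Longrightarrow> lincomb n w' c \<le> K * lincomb n w c"
  unfolding lincomb_def sum_distrib_left
  by (rule sum_mono) (simp add: mult.left_commute)

lemma lincomb_eq_0_iff: "lincomb n w c = 0 \<longleftrightarrow> (\<forall>i<n. c i = 0 \<or> w i = 0)"
  unfolding lincomb_def by auto

lemma semigroup_gen_eq_lincomb:
  "semigroup_gen A = range (\<lambda>c. int (lincomb (length A) ((!) A) c))"
  unfolding semigroup_gen_def lincomb_def by auto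

lemma semigroup_gen_map_upt:
  "semigroup_gen (map w [0..<n]) = range (\<lambda>c. int (lincomb n w c))"
  unfolding semigroup_gen_eq_lincomb lincomb_def by simp

lemma semigroup_gen_add:
  assumes "x \<in> semigroup_gen A" and "y \<in> semigroup_gen A"
  shows "x + y \<in> semigroup_gen A"
proof -
  obtain c e where "x = int (lincomb (length A) ((!) A) c)" and "y = int (lincomb (length A) ((!) A) e)"
    using assms unfolding semigroup_gen_eq_lincomb by blast
  then have "x + y = int (lincomb (length A) ((!) A) (\<lambda>i. c i + e i))"
    by (simp add: lincomb_add)
  then show ?thesis unfolding semigroup_gen_eq_lincomb by blast
qed

lemma nth_in_semigroup_gen:
  assumes "i < length A" shows "int (A ! i) \<in> semigroup_gen A"
proof -
  have "A ! i = lincomb (length A) ((!) A) (\<lambda>j. if j = i then 1 else 0)"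
    using lincomb_unit[OF assms] by simp
  then show ?thesis unfolding semigroup_gen_eq_lincomb by (rule image_eqI[OF arg_cong UNIV_I])
qed

lemma semigroup_gen_nonzero_decompose:
  assumes "s \<in> semigroup_gen A - {0}"
  obtains i where "i < length A" and "s - int (A ! i) \<in> semigroup_gen A"
proof -
  obtain c where s: "s = int (lincomb (length A) ((!) A) c)"
    using assms unfolding semigroup_gen_eq_lincomb by blast
  then obtain i where i: "i < length A" "c i > 0"
    using assms lincomb_eq_0_iff by fastforce
  let ?e = "\<lambda>j. if j = i then 1 else 0"
  have "\<And>j. ?e j \<le> c j" using i(2) by simp
  then have "lincomb (length A) ((!) A) (\<lambda>j. c j - ?e j) + A ! i = lincomb (length A) ((!) A) c"
    using lincomb_diff[of "length A" ?e c "(!) A"] lincomb_unit[OF i(1), of "(!) A" 1] by simp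
  then have "s - int (A ! i) = int (lincomb (length A) ((!) A) (\<lambda>j. c j - ?e j))"
    using s by linarith
  then show ?thesis using that i(1) unfolding semigroup_gen_eq_lincomb by blast
qed

lemma pseudo_frobenius_iff_generators:
  assumes "0 \<notin> set A"
  shows "u \<in> pseudo_frobenius A \<longleftrightarrow>
    u \<notin> semigroup_gen A \<and> (\<forall>i<length A. u + int (A ! i) \<in> semigroup_gen A)"
proof -
  have "u + s \<in> semigroup_gen A"
    if s: "s \<in> semigroup_gen A - {0}" and u: "\<forall>i<length A. u + int (A ! i) \<in> semigroup_gen A"
    for s
  proof -
    obtain i where "i < length A" and "s - int (A ! i) \<in> semigroup_gen A"
      using semigroup_gen_nonzero_decompose[OF s] .
    then show ?thesis
      using semigroup_gen_add[of "u + int (A ! i)" A "s - int (A ! i)"] u by simp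
  qed
  moreover have "int (A ! i) \<in> semigroup_gen A - {0}" if "i < length A" for i
    using nth_in_semigroup_gen[OF that] assms that by (auto simp: in_set_conv_nth)
  ultimately show ?thesis unfolding pseudo_frobenius_def by blast
qed

section \<open>The semigroup generated by shifted repunits\<close>

locale repunit_semigroup =
  fixes b n d :: nat
  assumes b_ge_2: "b \<ge> 2" and n_ge_2: "n \<ge> 2" and d_pos: "d > 0"
    and coprime_repunit_d: "coprime (repunit b n) d"
begin

abbreviation a :: nat where "a \<equiv> repunit b n"

definition g :: nat where "g = (b - 1) * a + d"

definition gen :: "nat \<Rightarrow> nat" where "gen i = b ^ i * a + repunit b i * d"

abbreviation gens :: "nat list" where "gens \<equiv> map gen [0..<n]"

abbreviation S :: "int set" where "S \<equiv> semigroup_gen gens"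

abbreviation val :: "(nat \<Rightarrow> nat) \<Rightarrow> nat" where "val \<equiv> lincomb n gen"

abbreviation rep :: "(nat \<Rightarrow> nat) \<Rightarrow> nat" where "rep \<equiv> lincomb n (repunit b)"

lemma n_le_a: "n \<le> a"
  using le_repunit[OF b_ge_2] .

lemma a_pos: "a > 0"
  using n_le_a n_ge_2 by simp

lemma pow_eq: "b ^ i = (b - 1) * repunit b i + 1"
  using pow_eq_repunit b_ge_2 by simp

lemma gen_eq: "gen i = g * repunit b i + a"
  unfolding gen_def g_def pow_eq by (simp add: algebra_simps)

lemma gen_0 [simp]: "gen 0 = a"
  by (simp add: gen_eq)

lemma gen_1: "gen 1 = g + a"
  unfolding gen_eq repunit_1[OF b_ge_2] by simp

lemma gen_pos: "gen i > 0"
  using a_pos by (simp add: gen_eq)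

lemma a_le_g: "a \<le> g"
proof -
  have "1 * a \<le> (b - 1) * a" using b_ge_2 by (intro mult_le_mono1) simp
  then show ?thesis unfolding g_def by linarith
qed

lemma coprime_g_a: "coprime g a"
  using coprime_repunit_d gcd_add_mult[of a "b - 1" d]
  unfolding g_def coprime_iff_gcd_eq_1 by (simp add: gcd.commute)

lemma mem_S_iff: "x \<in> S \<longleftrightarrow> (\<exists>c. x = int (val c))"
  unfolding semigroup_gen_map_upt by auto

lemma mult_gen_in_S: "i < n \<Longrightarrow> int (m * gen i) \<in> S"
  unfolding mem_S_iff by (metis lincomb_unit)

lemma val_eq: "val c = g * rep c + a * (\<Sum>i<n. c i)"
  unfolding gen_eq by (rule lincomb_affine)

lemma pow_comb_eq: "lincomb n ((^) b) c = (b - 1) * rep c + (\<Sum>i<n. c i)"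
proof -
  have "(\<lambda>i. b ^ i) = (\<lambda>i. (b - 1) * repunit b i + 1)"
    using pow_eq by simp
  then show ?thesis using lincomb_affine[of n "b - 1" "repunit b" 1 c] by simp
qed

lemma g_int: "int g = int (b - 1) * int a + int d"
  unfolding g_def by simp

lemma d_eq: "int d = int g - int (b - 1) * int a"
  unfolding g_int by simp

definition top_gap :: "nat \<Rightarrow> int" where
  "top_gap j = int a * int g - int j * int d"

lemma top_gap_representation:
  assumes val: "int (val c) = top_gap j" and "1 \<le> j" and "j < a"
  shows "rep c + j = a" and "(\<Sum>i<n. c i) = j * (b - 1)"
proof -
  let ?M = "int (rep c)" and ?N = "int (\<Sum>i<n. c i)"
  have key: "int g * (int a - int j - ?M) = int a * (?N - int j * int (b - 1))"
    using val unfolding val_eq top_gap_def d_eq by (simp add: algebra_simps)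
  have "rep c < a"
  proof (rule ccontr)
    assume "\<not> rep c < a"
    then have "int g * int a \<le> int g * ?M" by (simp add: mult_left_mono)
    moreover have "g * rep c \<le> val c" unfolding val_eq by simp
    then have "int g * ?M \<le> int (val c)" by (simp only: of_nat_mult[symmetric] of_nat_le_iff)
    moreover have "int j * int d > 0" using \<open>1 \<le> j\<close> d_pos by simp
    ultimately show False using val unfolding top_gap_def by (simp add: mult.commute)
  qed
  have "coprime (int a) (int g)"
    using coprime_g_a by (simp add: coprime_commute)
  moreover have "int a dvd int g * (int a - int j - ?M)"
    unfolding key by simp
  ultimately have "int a dvd int a - int j - ?M"
    by (simp add: coprime_dvd_mult_right_iff)
  then have "int a dvd int a - (int a - int j - ?M)"
    by (rule dvd_diff[OF dvd_refl])
  then obtain k where k: "int j + ?M = int a * k"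
    by (auto simp: dvd_def)
  have "0 < int a * k" and "int a * k < int a * 2"
    using k \<open>1 \<le> j\<close> \<open>j < a\<close> \<open>rep c < a\<close> by linarith+
  then have "k = 1"
    using a_pos by (simp add: zero_less_mult_iff mult_less_cancel_left)
  then show "rep c + j = a" using k by simp
  then have "int a - int j - ?M = 0" by simp
  then have "int a * (?N - int j * int (b - 1)) = 0" using key by simp
  then have "?N = int (j * (b - 1))" using a_pos by simp
  then show "(\<Sum>i<n. c i) = j * (b - 1)" by (simp only: of_nat_eq_iff)
qed

lemma top_gap_not_in_S:
  assumes "1 \<le> j" and "j < n"
  shows "top_gap j \<notin> S"
proof
  assume "top_gap j \<in> S"
  then obtain c where val: "int (val c) = top_gap j"
    unfolding mem_S_iff by metis
  have "j < a" using \<open>j < n\<close> n_le_a by simp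
  note rep = top_gap_representation[OF val \<open>1 \<le> j\<close> this]
  have "lincomb n ((^) b) c = (b - 1) * a"
    unfolding pow_comb_eq rep(2) rep(1)[symmetric] by (simp add: algebra_simps)
  then have "(0 + (\<Sum>i<n. c i * b ^ i)) mod b ^ n = b ^ n - 1"
    using pow_eq[of n] unfolding lincomb_def by simp
  then have "n * (b - 1) \<le> j * (b - 1)"
    using coeff_sum_ge_if_mod_pow_eq_minus_one[OF b_ge_2] rep(2) by fastforce
  then show False using \<open>j < n\<close> b_ge_2 by simp
qed

lemma exists_rep_with_small_sum:
  assumes "k < a"
  shows "\<exists>c. rep c = a - 1 - k \<and> (\<Sum>i<n. c i) \<le> b + (b - 1) * k"
  using assms
proof (induction k)
  case 0
  have "rep (\<lambda>i. if i = n - 1 then b else 0) = a - 1"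
    using lincomb_unit[of "n - 1" n] repunit_Suc[OF b_ge_2, of "n - 1"] n_ge_2 by simp
  moreover have "(\<Sum>i<n. if i = n - 1 then b else 0) = b"
    using n_ge_2 by simp
  ultimately show ?case by force
next
  case (Suc k)
  then obtain c where c: "rep c = a - 1 - k" and sum_c: "(\<Sum>i<n. c i) \<le> b + (b - 1) * k"
    by auto
  then have "rep c \<noteq> 0" using Suc.prems by simp
  then obtain i where "Suc i < n" and "c (Suc i) > 0"
  proof -
    obtain j where "j < n" "c j > 0" "repunit b j \<noteq> 0"
      using \<open>rep c \<noteq> 0\<close> unfolding lincomb_eq_0_iff by auto
    then show ?thesis using that by (cases j) auto
  qed
  define e where "e \<equiv> \<lambda>j. if j = Suc i then 1 else (0::nat)"
  define e' where "e' \<equiv> \<lambda>j. if j = i then b else (0::nat)"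
  define c' where "c' \<equiv> \<lambda>j. c j - e j + e' j"
  have exchange: "lincomb n w c' + lincomb n w e = lincomb n w c + lincomb n w e'" for w
    unfolding c'_def by (rule lincomb_exchange) (use \<open>c (Suc i) > 0\<close> in \<open>simp add: e_def\<close>)
  have "rep c' + repunit b (Suc i) = rep c + b * repunit b i"
    using exchange[where w = "repunit b"] lincomb_unit \<open>Suc i < n\<close> unfolding e_def e'_def by simp
  then have "rep c' = a - 1 - Suc k"
    using c repunit_Suc[OF b_ge_2, of i] by simp
  moreover have "(\<Sum>j<n. c' j) + 1 = (\<Sum>j<n. c j) + b"
    using exchange[where w = "\<lambda>_. 1"] lincomb_unit \<open>Suc i < n\<close> unfolding e_def e'_def lincomb_one by simp
  then have "(\<Sum>j<n. c' j) \<le> b + (b - 1) * Suc k"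
    using sum_c b_ge_2 by (simp add: algebra_simps)
  ultimately show ?case by blast
qed

lemma large_in_S:
  assumes "x > top_gap 1"
  shows "x \<in> S"
proof -
  obtain m t where m_lt: "m < a" and x_eq: "x = int g * int m + int a * t"
    using coprime_residue_decomposition[OF coprime_g_a a_pos] .
  define k where "k = a - 1 - m"
  obtain c where rep_c: "rep c = m" and sum_c: "(\<Sum>i<n. c i) \<le> b + (b - 1) * k"
    using exists_rep_with_small_sum[of k] m_lt unfolding k_def by auto
  define N where "N = (\<Sum>i<n. c i)"
  have "int a * (int (b - 1) * (int k + 1)) \<le> int (b - 1) * int a * (int k + 1) + int d * int k"
    by simp
  also have "\<dots> = int g * (int k + 1) - int d"
    unfolding g_int by (simp add: algebra_simps)
  also have "\<dots> = int a * int g - int d - int g * int m"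
    using m_lt unfolding k_def by (simp add: algebra_simps)
  also have "\<dots> < int a * t"
    using assms x_eq unfolding top_gap_def by simp
  finally have "int a * t > int a * (int (b - 1) * (int k + 1))" .
  then have "t \<ge> int (b - 1) * (int k + 1) + 1"
    using a_pos by (simp add: mult_less_cancel_left)
  moreover have "int N \<le> int (b + (b - 1) * k)"
    using sum_c unfolding N_def by (simp only: of_nat_le_iff)
  moreover have "int (b + (b - 1) * k) = int (b - 1) * (int k + 1) + 1"
    using b_ge_2 by (simp only: of_nat_add of_nat_mult) (simp add: algebra_simps)
  ultimately have t_ge: "t \<ge> int N" by linarith
  define c' where "c' = (\<lambda>i. c i + (if i = 0 then nat t - N else 0))"
  have "val c' = val c + (nat t - N) * a"
    unfolding c'_def lincomb_add using lincomb_unit n_ge_2 by simp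
  then have "int (val c') = int (val c) + int (nat t - N) * int a"
    by simp
  moreover have "int (nat t - N) = t - int N"
    using t_ge by (simp add: le_nat_iff)
  moreover have "int (val c) = int g * int m + int a * int N"
    unfolding val_eq rep_c N_def by simp
  ultimately have "int (val c') = x"
    unfolding x_eq by (simp only:) (simp add: algebra_simps)
  then show ?thesis unfolding mem_S_iff by metis
qed

definition carry_vec :: "nat \<Rightarrow> nat \<Rightarrow> nat" where
  "carry_vec v i = (if i = v then b else if v < i then b - 1 else 0)"

lemma carry_vec_sums:
  assumes "v < m"
  shows "lincomb m ((^) b) (carry_vec v) = b ^ m" and "(\<Sum>i<m. carry_vec v i) = 1 + (b - 1) * (m - v)"
proof -
  have "lincomb m ((^) b) (carry_vec v) = b ^ m \<and> (\<Sum>i<m. carry_vec v i) = 1 + (b - 1) * (m - v)"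
    if "v < m" for m
    using that
  proof (induction m)
    case (Suc m)
    consider "v = m" and "carry_vec v m = b" | "v < m" and "carry_vec v m = b - 1"
      using Suc.prems by (auto simp: carry_vec_def less_Suc_eq)
    then show ?case
    proof cases
      case 1
      then have "lincomb m ((^) b) (carry_vec v) = 0" and "(\<Sum>i<m. carry_vec v i) = 0"
        unfolding lincomb_eq_0_iff carry_vec_def by simp_all
      with 1 show ?thesis using b_ge_2 by (simp add: lincomb_Suc)
    next
      case 2
      have "b ^ m + (b - 1) * b ^ m = b ^ Suc m"
        using b_ge_2 by (simp add: algebra_simps)
      with 2 Suc.IH show ?thesis by (simp add: lincomb_Suc Suc_diff_le)
    qed
  qed simp
  then show "lincomb m ((^) b) (carry_vec v) = b ^ m"
    and "(\<Sum>i<m. carry_vec v i) = 1 + (b - 1) * (m - v)"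
    using assms by simp_all
qed

lemma rep_carry_vec:
  assumes "v < n"
  shows "rep (carry_vec v) + (n - v) = a"
proof -
  have "(b - 1) * a + 1 = (b - 1) * rep (carry_vec v) + (1 + (b - 1) * (n - v))"
    using pow_comb_eq[of "carry_vec v"] carry_vec_sums[OF assms] pow_eq[of n] by simp
  then have "(b - 1) * (rep (carry_vec v) + (n - v)) = (b - 1) * a"
    by (simp add: algebra_simps)
  then show ?thesis using b_ge_2 by simp
qed

lemma val_carry_vec:
  assumes "v < n"
  shows "int (val (carry_vec v)) = top_gap (n - v) + int a"
proof -
  have rep: "int (rep (carry_vec v)) = int a - int (n - v)"
    using rep_carry_vec[OF assms] by linarith
  have "int (val (carry_vec v)) =
      int g * (int a - int (n - v)) + int a * (1 + int (b - 1) * int (n - v))"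
    unfolding val_eq carry_vec_sums(2)[OF assms] rep[symmetric]
    by (simp only: of_nat_add of_nat_mult of_nat_1)
  then show ?thesis
    unfolding top_gap_def d_eq by (simp add: algebra_simps)
qed

lemma top_gap_plus_gen_in_S:
  assumes "1 \<le> j" and "j < n" and "i < n"
  shows "top_gap j + int (gen i) \<in> S"
proof (cases "j \<le> repunit b i")
  case True
  define r where "r = repunit b i"
  have "r < a"
    using strict_mono_repunit[OF b_ge_2] \<open>i < n\<close> unfolding r_def by (simp add: strict_mono_less)
  with a_le_g have "int (g + 1 + j * b - r) = int g + 1 + int j * int b - int r"
    by simp
  moreover have "int (r - j) = int r - int j" using True unfolding r_def by simp
  ultimately have "int ((r - j) * gen 1) + int ((g + 1 + j * b - r) * gen 0)
      = (int r - int j) * (int g + int a) + (int g + 1 + int j * int b - int r) * int a"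
    unfolding gen_1 by simp
  also have "\<dots> = top_gap j + int (gen i)"
    unfolding top_gap_def gen_eq d_eq r_def using b_ge_2 by (simp add: algebra_simps)
  finally have "top_gap j + int (gen i) = int ((r - j) * gen 1) + int ((g + 1 + j * b - r) * gen 0)" ..
  moreover have "int ((r - j) * gen 1) + int ((g + 1 + j * b - r) * gen 0) \<in> S"
    using n_ge_2 by (intro semigroup_gen_add mult_gen_in_S) simp_all
  ultimately show ?thesis by simp
next
  case False
  define j' where "j' = j - repunit b i"
  have "n - j' < n" and "n - (n - j') = j'"
    using False \<open>j < n\<close> unfolding j'_def by auto
  then have "int (val (carry_vec (n - j'))) + int ((b - 1) * repunit b i * gen 0)
      = top_gap j' + int a + int (b - 1) * int (repunit b i) * int a"
    using val_carry_vec by simp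
  also have "\<dots> = top_gap j + int (gen i)"
    using False unfolding j'_def top_gap_def gen_eq d_eq by (simp add: algebra_simps)
  finally have "top_gap j + int (gen i) = int (val (carry_vec (n - j'))) + int ((b - 1) * repunit b i * gen 0)" ..
  moreover have "int (val (carry_vec (n - j'))) + int ((b - 1) * repunit b i * gen 0) \<in> S"
    using n_ge_2 by (intro semigroup_gen_add mult_gen_in_S) (auto simp: mem_S_iff)
  ultimately show ?thesis by simp
qed

lemma top_gap_in_pseudo_frobenius:
  assumes "1 \<le> j" and "j < n"
  shows "top_gap j \<in> pseudo_frobenius gens"
proof -
  have "0 \<notin> set gens" using gen_pos by (metis ex_map_conv less_irrefl)
  then show ?thesis using top_gap_not_in_S[OF assms] top_gap_plus_gen_in_S[OF assms]
    by (simp add: pseudo_frobenius_iff_generators)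
qed

lemma gen_exchange: "b * gen k + gen (Suc j) = gen (Suc k) + b * gen j"
  unfolding gen_eq repunit_Suc[OF b_ge_2] by (simp add: algebra_simps)

lemma gen_exchange_last: "b * gen (n - 1) + gen (Suc j) = b * gen j + (b ^ n + d) * gen 0"
proof -
  have a_eq: "a = b * repunit b (n - 1) + 1"
    using repunit_Suc[OF b_ge_2, of "n - 1"] n_ge_2 by simp
  have "b ^ n + d = g + 1"
    unfolding g_def pow_eq[of n] by simp
  then show ?thesis
    unfolding gen_eq repunit_Suc[OF b_ge_2] using a_eq by (simp add: algebra_simps)
qed

abbreviation weight :: "(nat \<Rightarrow> nat) \<Rightarrow> nat" where
  "weight \<equiv> lincomb n (\<lambda>i. (b + 1) ^ i)"

text \<open>A reduced vector admits neither exchange: \<open>gen_exchange\<close> raises the weight and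
  \<open>gen_exchange_last\<close> creates a copy of \<open>gen 0\<close>.\<close>

definition reduced :: "(nat \<Rightarrow> nat) \<Rightarrow> bool" where
  "reduced c \<longleftrightarrow> (\<forall>c'. val c' = val c \<longrightarrow> c' 0 = 0 \<and> weight c' \<le> weight c)"

lemma reducedD:
  assumes "reduced c" and "val c' = val c"
  shows "c' 0 = 0" and "weight c' \<le> weight c"
  using assms unfolding reduced_def by auto

lemma reduced_no_exchange:
  assumes "reduced c" and "j < k" and "k < n" and "c (Suc j) \<ge> 1"
    and "c k \<ge> b + (if Suc j = k then 1 else 0)"
  shows False
proof -
  define e where "e = (\<lambda>i. (if i = k then b else 0) + (if i = Suc j then 1 else (0::nat)))"
  have e_le: "\<And>i. i < n \<Longrightarrow> e i \<le> c i"
    using assms(4,5) unfolding e_def by auto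
  show False
  proof (cases "Suc k < n")
    case True
    define e' where "e' = (\<lambda>i. (if i = Suc k then 1 else 0) + (if i = j then b else (0::nat)))"
    define c' where "c' = (\<lambda>i. c i - e i + e' i)"
    have exchange: "lincomb n w c' + lincomb n w e = lincomb n w c + lincomb n w e'" for w
      unfolding c'_def by (rule lincomb_exchange[OF e_le])
    have "val c' = val c"
      using exchange[of gen] gen_exchange[of k j] True \<open>k < n\<close> \<open>j < k\<close>
      unfolding e_def e'_def by (simp add: lincomb_two_units)
    have "(b + 1) ^ j < (b + 1) ^ k"
      using \<open>j < k\<close> b_ge_2 by (intro power_strict_increasing) auto
    then have "weight e < weight e'"
      using True \<open>k < n\<close> \<open>j < k\<close> unfolding e_def e'_def by (simp add: lincomb_two_units)
    then have "weight c < weight c'"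
      using exchange[of "\<lambda>i. (b + 1) ^ i"] by linarith
    then show False
      using reducedD(2)[OF \<open>reduced c\<close> \<open>val c' = val c\<close>] by simp
  next
    case False
    then have k: "k = n - 1" using \<open>k < n\<close> by simp
    define e' where "e' = (\<lambda>i. (if i = j then b else 0) + (if i = 0 then b ^ n + d else (0::nat)))"
    define c' where "c' = (\<lambda>i. c i - e i + e' i)"
    have "val c' + val e = val c + val e'"
      unfolding c'_def by (rule lincomb_exchange[OF e_le])
    then have "val c' = val c"
      using gen_exchange_last[of j] \<open>k < n\<close> \<open>j < k\<close>
      unfolding e_def e'_def k by (simp add: lincomb_two_units)
    moreover have "c' 0 \<noteq> 0"
      using d_pos unfolding c'_def e'_def by simp
    ultimately show False
      using reducedD(1)[OF \<open>reduced c\<close>, of c'] by simp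
  qed
qed

lemma reduced_le_carry_vec:
  assumes "reduced c"
  obtains v where "1 \<le> v" and "v < n" and "\<And>i. i < n \<Longrightarrow> c i \<le> carry_vec v i"
proof (cases "\<exists>i<n. c i > 0")
  case False
  then show ?thesis using that[of 1] n_ge_2 by auto
next
  case True
  define v where "v = (LEAST i. i < n \<and> c i > 0)"
  have v: "v < n" "c v > 0"
    using LeastI_ex[OF True] unfolding v_def by auto
  have below: "c i = 0" if "i < v" for i
    using not_less_Least[OF that[unfolded v_def]] v that by auto
  have "c 0 = 0" using reducedD(1)[OF assms refl] .
  then obtain v0 where v0: "v = Suc v0" using v by (cases v) auto
  have at_v: "c v \<le> b"
    using reduced_no_exchange[OF assms, of v0 v] v v0 by fastforce
  have above: "c i \<le> b - 1" if "v < i" and "i < n" for i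
    using reduced_no_exchange[OF assms, of v0 i] v v0 that by fastforce
  have "c i \<le> carry_vec v i" if "i < n" for i
    using below at_v above that unfolding carry_vec_def by (cases "i < v") auto
  then show ?thesis using that[of v] v v0 by simp
qed

lemma exists_reduced:
  assumes "u \<notin> S" and "u + int a \<in> S"
  obtains c where "int (val c) = u + int a" and "reduced c"
proof -
  obtain c0 where c0: "int (val c0) = u + int a"
    using assms(2) unfolding mem_S_iff by metis
  have "(b + 1) ^ i \<le> (b + 1) ^ n * gen i" if "i < n" for i
  proof -
    have "(b + 1) ^ i \<le> (b + 1) ^ n" using that by (intro power_increasing) auto
    also have "\<dots> \<le> (b + 1) ^ n * gen i" using gen_pos[of i] by simp
    finally show ?thesis .
  qed
  then have "weight c < (b + 1) ^ n * val c0 + 1" if "val c = val c0" for c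
    using lincomb_le_mult[of n "\<lambda>i. (b + 1) ^ i" "(b + 1) ^ n" gen c] that by simp
  then obtain c where same: "val c = val c0" and max: "\<And>c'. val c' = val c0 \<Longrightarrow> weight c' \<le> weight c"
    using Lattices_Big.ex_has_greatest_nat[of "\<lambda>c. val c = val c0" c0 weight] by blast
  have "c' 0 = 0" if "val c' = val c0" for c'
  proof (rule ccontr)
    assume "c' 0 \<noteq> 0"
    let ?e = "\<lambda>i. if i = 0 then 1 else (0::nat)"
    have "val (\<lambda>i. c' i - ?e i) + val ?e = val c'"
      by (rule lincomb_diff) (use \<open>c' 0 \<noteq> 0\<close> in simp)
    then have "u = int (val (\<lambda>i. c' i - ?e i))"
      using c0 that lincomb_unit[of 0 n gen 1] n_ge_2 by simp
    then show False using assms(1) unfolding mem_S_iff by blast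
  qed
  then have "reduced c"
    unfolding reduced_def using same max by simp
  moreover have "int (val c) = u + int a" using c0 same by simp
  ultimately show ?thesis using that by blast
qed

lemma pseudo_frobenius_is_top_gap:
  assumes "u \<in> pseudo_frobenius gens"
  obtains j where "1 \<le> j" and "j < n" and "u = top_gap j"
proof -
  have u: "u \<notin> S" and u_plus: "\<And>s. s \<in> S - {0} \<Longrightarrow> u + s \<in> S"
    using assms unfolding pseudo_frobenius_def by auto
  have "int (1 * gen 0) \<in> S - {0}"
    using mult_gen_in_S[of 0 1] n_ge_2 a_pos by simp
  then have "u + int a \<in> S" using u_plus by simp
  then obtain c where c: "int (val c) = u + int a" and "reduced c"
    using exists_reduced u by blast
  obtain v where v: "1 \<le> v" "v < n" and le: "\<And>i. i < n \<Longrightarrow> c i \<le> carry_vec v i"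
    using reduced_le_carry_vec[OF \<open>reduced c\<close>] by blast
  define s where "s = val (\<lambda>i. carry_vec v i - c i)"
  have "s + val c = val (carry_vec v)"
    unfolding s_def by (rule lincomb_diff[OF le])
  then have u_s: "u + int s = top_gap (n - v)"
    using c val_carry_vec[OF v(2)] by simp
  have not_in_S: "top_gap (n - v) \<notin> S" using top_gap_not_in_S v by simp
  have "s = 0"
  proof (rule ccontr)
    assume "s \<noteq> 0"
    moreover have "int s \<in> S" unfolding mem_S_iff s_def by blast
    ultimately have "int s \<in> S - {0}" by simp
    then show False using u_plus u_s not_in_S by fastforce
  qed
  then show ?thesis using that[of "n - v"] u_s v by simp
qed

lemma pseudo_frobenius_gens: "pseudo_frobenius gens = top_gap ` {1..<n}"
proof (intro set_eqI iffI)
  fix u assume "u \<in> pseudo_frobenius gens"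
  then obtain j where "1 \<le> j" "j < n" "u = top_gap j" by (rule pseudo_frobenius_is_top_gap)
  then show "u \<in> top_gap ` {1..<n}" by simp
next
  fix u assume "u \<in> top_gap ` {1..<n}"
  then show "u \<in> pseudo_frobenius gens" using top_gap_in_pseudo_frobenius by auto
qed

lemma frobenius_gens: "frobenius gens = top_gap 1"
  unfolding frobenius_def
proof (rule Greatest_equality)
  show "top_gap 1 \<notin> S" using top_gap_not_in_S n_ge_2 by simp
  show "y \<le> top_gap 1" if "y \<notin> S" for y
    using large_in_S[of y] that by linarith
qed

lemma sg_type_gens: "sg_type gens = n - 1"
proof -
  have "inj_on top_gap {1..<n}"
    using d_pos by (intro inj_onI) (simp add: top_gap_def)
  then show ?thesis
    unfolding sg_type_def pseudo_frobenius_gens by (simp add: card_image)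
qed

lemma pseudo_frobenius_gens_eq:
  "pseudo_frobenius gens = {frobenius gens - int k * int d | k. k \<le> n - 2}"
proof -
  have top_gap_Suc: "top_gap (Suc k) = top_gap 1 - int k * int d" for k
    unfolding top_gap_def by (simp add: algebra_simps)
  have "top_gap ` {1..<n} = {top_gap 1 - int k * int d | k. k \<le> n - 2}"
  proof (intro set_eqI iffI)
    fix x assume "x \<in> top_gap ` {1..<n}"
    then obtain j where j: "1 \<le> j" "j < n" and "x = top_gap j" by auto
    then have "x = top_gap 1 - int (j - 1) * int d"
      using top_gap_Suc[of "j - 1"] by simp
    moreover have "j - 1 \<le> n - 2" using j by simp
    ultimately show "x \<in> {top_gap 1 - int k * int d | k. k \<le> n - 2}" by blast
  next
    fix x assume "x \<in> {top_gap 1 - int k * int d | k. k \<le> n - 2}"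
    then obtain k where "k \<le> n - 2" and "x = top_gap (Suc k)"
      unfolding top_gap_Suc by blast
    moreover have "Suc k \<in> {1..<n}" using \<open>k \<le> n - 2\<close> n_ge_2 by simp
    ultimately show "x \<in> top_gap ` {1..<n}" by blast
  qed
  then show ?thesis
    unfolding pseudo_frobenius_gens frobenius_gens .
qed

end

theorem theorem4p3:
  fixes b n d a :: nat and A :: "nat list"
  assumes "b \<ge> 2" and "n \<ge> 2"
    and "a = (b ^ n - 1) div (b - 1)"
    and "d > 0" and "gcd a d = 1"
    and "A = map (\<lambda>i. b ^ i * a + ((b ^ i - 1) div (b - 1)) * d) [0..<n]"
  shows "sg_type A = n - 1 \<and>
         pseudo_frobenius A = {frobenius A - int k * int d | k. k \<le> n - 2}"
proof -
  interpret repunit_semigroup b n d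
    using assms by unfold_locales (simp_all add: repunit_def coprime_iff_gcd_eq_1)
  have "A = gens"
    unfolding assms(6) assms(3) gen_def repunit_def ..
  then show ?thesis
    using sg_type_gens pseudo_frobenius_gens_eq by simp
qed

end
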